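(* Let $p\geq 1$ and let $n_0<n_1<\cdots<n_p$ be positive integers with $n_i=n_0+id$ for a fixed positive integer $d$, such that $\gcd(n_0,\dots,n_p)=1$ and $\{n_0,\dots,n_p\}$ minimally generates the numerical semigroup $S_1=\langle n_0,\dots,n_p\rangle$. Then the Apéry set $\mathrm{Ap}(S_1,n_p)$ is a homogeneous subset of $S_1$.
   Context: For a numerical semigroup $T=\langle n_0,\dots,n_p\rangle$ and $0\neq a\in T$, the Apéry set is $\mathrm{Ap}(T,a)=\{s\in T: s-a\notin T\}$. For $0\neq s\in T$, the set of lengths is $\mathcal{L}(s)=\{\sum_{i=0}^p\lambda_i : s=\sum_{i=0}^p\lambda_in_i,\ \lambda_i\in\mathbb{N}\}$. A subset $A\subseteq T$ is homogeneous if it is empty or $\mathcal{L}(s)$ is a singleton for every $0\neq s\in A$. *)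

theory Defs
  imports Main
begin

definition gen_by :: "(nat \<Rightarrow> nat) \<Rightarrow> nat set \<Rightarrow> nat set" where
  "gen_by g I = {s. \<exists>lam :: nat \<Rightarrow> nat. s = (\<Sum>i\<in>I. lam i * g i)}"

definition num_sgp :: "(nat \<Rightarrow> nat) \<Rightarrow> nat \<Rightarrow> nat set" where
  "num_sgp g p = gen_by g {..p}"

definition minimally_generates :: "(nat \<Rightarrow> nat) \<Rightarrow> nat \<Rightarrow> bool" where
  "minimally_generates g p \<longleftrightarrow> (\<forall>i\<le>p. g i \<notin> gen_by g ({..p} - {i}))"

text \<open>Apery set Ap(T,a) = {s in T. s - a not in T} (s - a taken in the integers).\<close>
definition apery :: "nat set \<Rightarrow> nat \<Rightarrow> nat set" where
  "apery T a = {s \<in> T. \<not> (a \<le> s \<and> s - a \<in> T)}"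

definition lengths :: "(nat \<Rightarrow> nat) \<Rightarrow> nat \<Rightarrow> nat \<Rightarrow> nat set" where
  "lengths g p s = {(\<Sum>i\<le>p. lam i) | lam :: nat \<Rightarrow> nat. s = (\<Sum>i\<le>p. lam i * g i)}"

definition homogeneous :: "(nat \<Rightarrow> nat) \<Rightarrow> nat \<Rightarrow> nat set \<Rightarrow> bool" where
  "homogeneous g p A \<longleftrightarrow> A = {} \<or> (\<forall>s\<in>A. s \<noteq> 0 \<longrightarrow> (\<exists>l. lengths g p s = {l}))"

end

theory Submission
  imports Defs "HOL-Number_Theory.Cong"
begin

text \<open>
  Since \<open>n i = n 0 + i * d\<close>, a factorization of \<open>s\<close> of length \<open>k\<close> writes \<open>s = k * n 0 + m * d\<close>
  with \<open>m \<le> k * p\<close>, and conversely every such number lies in the semigroup. For \<open>s\<close> in the Apery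
  set of \<open>n p\<close> this forces \<open>m < p\<close>, since otherwise \<open>s - n p = (k - 1) * n 0 + (m - p) * d\<close>
  would lie in the semigroup. Minimality gives \<open>p < n 0\<close> and \<open>Gcd = 1\<close> gives \<open>coprime (n 0) d\<close>,
  so \<open>m < n 0\<close> is determined by \<open>s\<close> modulo \<open>n 0\<close>, and hence so is the length \<open>k\<close>.
\<close>

lemma gen_by_add:
  assumes "x \<in> gen_by g I" "y \<in> gen_by g I"
  shows "x + y \<in> gen_by g I"
proof -
  obtain lam mu where "x = (\<Sum>i\<in>I. lam i * g i)" "y = (\<Sum>i\<in>I. mu i * g i)"
    using assms unfolding gen_by_def by blast
  then have "x + y = (\<Sum>i\<in>I. (lam i + mu i) * g i)"
    by (simp add: sum.distrib distrib_right)
  then show ?thesis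
    unfolding gen_by_def by (intro CollectI exI[of _ "\<lambda>i. lam i + mu i"])
qed

lemma mult_generator_in_gen_by:
  assumes "finite I" "j \<in> I"
  shows "c * g j \<in> gen_by g I"
proof -
  have "(\<Sum>i\<in>I. (if i = j then c else 0) * g i) = (\<Sum>i\<in>I. if i = j then c * g i else 0)"
    by (rule sum.cong) auto
  also have "\<dots> = c * g j"
    using assms by (simp add: sum.delta)
  finally have "(\<Sum>i\<in>I. (if i = j then c else 0) * g i) = c * g j" .
  then show ?thesis
    unfolding gen_by_def by (intro CollectI exI[of _ "\<lambda>i. if i = j then c else 0"]) simp
qed

lemma arith_seq_combination_in_num_sgp:
  assumes arith: "\<And>i. i \<le> p \<Longrightarrow> n i = n 0 + i * d"
    and "m \<le> k * p"
  shows "k * n 0 + m * d \<in> num_sgp n p"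
  using \<open>m \<le> k * p\<close>
proof (induction k arbitrary: m)
  case 0
  then show ?case
    using mult_generator_in_gen_by[of "{..p}" 0 0 n] by (simp add: num_sgp_def)
next
  case (Suc k)
  define j where "j = min m p"
  have "j \<le> p" "j \<le> m"
    by (simp_all add: j_def)
  then obtain r where m: "m = j + r"
    using le_Suc_ex by blast
  have "r \<le> k * p"
    using Suc.prems m unfolding j_def mult_Suc by arith
  then have "k * n 0 + r * d \<in> num_sgp n p"
    by (rule Suc.IH)
  moreover have "n j \<in> num_sgp n p"
    using mult_generator_in_gen_by[of "{..p}" j 1 n] \<open>j \<le> p\<close> by (simp add: num_sgp_def)
  ultimately have "k * n 0 + r * d + n j \<in> num_sgp n p"
    unfolding num_sgp_def by (rule gen_by_add)
  moreover have "k * n 0 + r * d + n j = Suc k * n 0 + m * d"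
    using arith[OF \<open>j \<le> p\<close>] m by (simp add: algebra_simps)
  ultimately show ?case
    by simp
qed

lemma arith_seq_coprime_if_Gcd_eq_1:
  fixes n :: "nat \<Rightarrow> nat" and p d :: nat
  assumes "\<And>i. i \<le> p \<Longrightarrow> n i = n 0 + i * d"
    and "Gcd (n ` {..p}) = 1"
  shows "coprime (n 0) d"
proof -
  have "gcd (n 0) d dvd Gcd (n ` {..p})"
  proof (rule Gcd_greatest)
    fix x assume "x \<in> n ` {..p}"
    then obtain i where "i \<le> p" "x = n i"
      by blast
    have "gcd (n 0) d dvd n 0 + i * d"
      by simp
    then show "gcd (n 0) d dvd x"
      using \<open>x = n i\<close> assms(1)[OF \<open>i \<le> p\<close>] by simp
  qed
  then show ?thesis
    using assms(2) by (simp add: coprime_iff_gcd_eq_1)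
qed

lemma arith_seq_minimally_generates_imp_less:
  assumes "\<And>i. i \<le> p \<Longrightarrow> n i = n 0 + i * d"
    and "0 < n 0"
    and "minimally_generates n p"
  shows "p < n 0"
proof (rule ccontr)
  assume "\<not> p < n 0"
  then have "n 0 \<le> p"
    by simp
  then have "n (n 0) \<notin> gen_by n ({..p} - {n 0})"
    using assms(3) unfolding minimally_generates_def by blast
  moreover have "n (n 0) = (1 + d) * n 0"
    using assms(1)[OF \<open>n 0 \<le> p\<close>] by simp
  moreover have "(1 + d) * n 0 \<in> gen_by n ({..p} - {n 0})"
    using \<open>0 < n 0\<close> by (intro mult_generator_in_gen_by) auto
  ultimately show False
    by simp
qed

lemma arith_seq_factorization:
  fixes n :: "nat \<Rightarrow> nat" and p d :: nat
  assumes "\<And>i. i \<le> p \<Longrightarrow> n i = n 0 + i * d"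
  shows "(\<Sum>i\<le>p. lam i * n i) = (\<Sum>i\<le>p. lam i) * n 0 + (\<Sum>i\<le>p. i * lam i) * d"
proof -
  have "(\<Sum>i\<le>p. lam i * n i) = (\<Sum>i\<le>p. lam i * n 0 + i * lam i * d)"
  proof (rule sum.cong)
    show "lam i * n i = lam i * n 0 + i * lam i * d" if "i \<in> {..p}" for i
      using assms[of i] that by (simp add: algebra_simps)
  qed simp
  then show ?thesis
    by (simp add: sum.distrib sum_distrib_right)
qed

lemma apery_arith_seq_factorization:
  assumes arith: "\<And>i. i \<le> p \<Longrightarrow> n i = n 0 + i * d"
    and "0 < p"
    and apery: "(\<Sum>i\<le>p. lam i * n i) \<in> apery (num_sgp n p) (n p)"
  shows "\<exists>m<p. (\<Sum>i\<le>p. lam i * n i) = (\<Sum>i\<le>p. lam i) * n 0 + m * d"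
proof -
  define k where "k = (\<Sum>i\<le>p. lam i)"
  define m where "m = (\<Sum>i\<le>p. i * lam i)"
  have s: "(\<Sum>i\<le>p. lam i * n i) = k * n 0 + m * d"
    unfolding k_def m_def by (rule arith_seq_factorization[OF arith])
  have "m \<le> (\<Sum>i\<le>p. p * lam i)"
    unfolding m_def by (rule sum_mono) simp
  then have m_le: "m \<le> k * p"
    by (simp add: k_def sum_distrib_left[symmetric] mult.commute)
  have "m < p"
  proof (rule ccontr)
    assume "\<not> m < p"
    then obtain q where m: "m = p + q"
      using le_Suc_ex not_less by blast
    obtain k' where k: "k = Suc k'"
      using m_le m \<open>0 < p\<close> by (cases k) auto
    have "q \<le> k' * p"
      using m_le unfolding m k mult_Suc by simp
    have "k' * n 0 + q * d \<in> num_sgp n p"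
      using arith_seq_combination_in_num_sgp[of p n d] arith \<open>q \<le> k' * p\<close> by blast
    moreover have "(\<Sum>i\<le>p. lam i * n i) = k' * n 0 + q * d + n p"
      using s k m arith[of p] by (simp add: algebra_simps)
    ultimately show False
      using apery unfolding apery_def by auto
  qed
  then show ?thesis
    using s k_def by blast
qed

lemma coprime_mult_add_mult_eq_imp_eq:
  fixes a b :: nat
  assumes "coprime a b" "m1 < a" "m2 < a"
    and "k1 * a + m1 * b = k2 * a + m2 * b"
  shows "k1 = k2"
proof -
  have "[m1 * b = m2 * b] (mod a)"
    using assms(4) unfolding cong_def by (metis mod_mult_self3)
  then have "m1 = m2"
    using assms(1-3) by (metis cong_less_modulus_unique_nat cong_mult_rcancel_nat coprime_commute)
  then show ?thesis
    using assms(2,4) by simp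
qed

lemma apery_arith_seq_lengths_eq:
  assumes arith: "\<And>i. i \<le> p \<Longrightarrow> n i = n 0 + i * d"
    and "0 < p" "p < n 0" "coprime (n 0) d"
    and apery: "s \<in> apery (num_sgp n p) (n p)"
    and "k1 \<in> lengths n p s" "k2 \<in> lengths n p s"
  shows "k1 = k2"
proof -
  have "\<exists>m<p. s = k * n 0 + m * d" if k: "k \<in> lengths n p s" for k
  proof -
    obtain lam where "k = (\<Sum>i\<le>p. lam i)" "s = (\<Sum>i\<le>p. lam i * n i)"
      using k unfolding lengths_def by blast
    then show ?thesis
      using apery_arith_seq_factorization[of p n d lam, OF arith \<open>0 < p\<close>] apery by simp
  qed
  then obtain m1 m2 where "m1 < p" "s = k1 * n 0 + m1 * d" "m2 < p" "s = k2 * n 0 + m2 * d"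
    using assms(6,7) by meson
  then show ?thesis
    using coprime_mult_add_mult_eq_imp_eq[of "n 0" d m1 m2 k1 k2] \<open>p < n 0\<close> \<open>coprime (n 0) d\<close>
    by simp
qed

theorem lemma4p3:
  fixes n :: "nat \<Rightarrow> nat" and p d :: nat
  assumes "p \<ge> 1"
    and "d > 0"
    and "n 0 > 0"
    and "\<And>i. i \<le> p \<Longrightarrow> n i = n 0 + i * d"
    and "Gcd (n ` {..p}) = 1"
    and "minimally_generates n p"
  shows "homogeneous n p (apery (num_sgp n p) (n p))"
proof -
  have "coprime (n 0) d"
    using assms(4,5) by (rule arith_seq_coprime_if_Gcd_eq_1)
  moreover have "p < n 0"
    using assms(4,3,6) by (rule arith_seq_minimally_generates_imp_less)
  ultimately have lengths_eq: "k1 = k2"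
    if "s \<in> apery (num_sgp n p) (n p)" "k1 \<in> lengths n p s" "k2 \<in> lengths n p s" for s k1 k2
    using that assms(1) by (intro apery_arith_seq_lengths_eq[of p n d, OF assms(4)]) simp_all
  have "\<exists>k. lengths n p s = {k}" if s: "s \<in> apery (num_sgp n p) (n p)" for s
  proof -
    obtain lam where "s = (\<Sum>i\<le>p. lam i * n i)"
      using s unfolding apery_def num_sgp_def gen_by_def atMost_def by auto
    then have "(\<Sum>i\<le>p. lam i) \<in> lengths n p s"
      unfolding lengths_def by blast
    then show ?thesis
      using lengths_eq[OF s] by blast
  qed
  then show ?thesis
    unfolding homogeneous_def by blast
qed

end
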